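(* Let $\phi:\mathbb{N}_0\to\mathbb{N}_0$ satisfy $\phi(0)=0$ and $\phi(x)\neq x$ for all $x\in\mathbb{N}$, and let $n\ge2$. If the local function $\phi_n$ has no cycle, then \[ \#M_n(\phi)^k=|J_{n,k}(\phi)|\le n-k\quad(1\le k\le n), \] where $J_{n,k}(\phi)=\{x\in D_n:\phi_n^k(x)\in D_n\}$.
   Context: $\mathbb{N}=\{1,2,\dots\}$, $\mathbb{N}_0=\mathbb{N}\cup\{0\}$, $D_n=\{1,\dots,n\}$, $D_{n,0}=D_n\cup\{0\}$. The local function $\phi_n:D_{n,0}\to D_{n,0}$ is $\phi_n(x)=\phi(x)$ if $x\in D_n$ and $\phi(x)\in D_n$, and $\phi_n(x)=0$ otherwise. "$\phi_n$ has no cycle" means there are no $m\ge2$ and $x\in D_n$ with $\phi_n^m(x)=x$. For $1\le i\le n$, $\mathbf{e}_i$ is the $i$-th unit vector in $\mathbb{Z}^n$ and $\mathbf{e}_0$ the zero vector. $M_n(\phi)$ is the $n\times n$ matrix whose $j$-th column is $\mathbf{e}_{\phi_n(j)}$. $\#A$ denotes the number of nonzero entries of a matrix $A$, and $\#A^k$ means $\#(A^k)$. *)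

theory Defs
  imports Main "Jordan_Normal_Form.Matrix"
begin

definition local_fun :: "(nat \<Rightarrow> nat) \<Rightarrow> nat \<Rightarrow> nat \<Rightarrow> nat" where
  "local_fun phi n x = (if x \<in> {1..n} \<and> phi x \<in> {1..n} then phi x else 0)"

definition has_no_cycle :: "(nat \<Rightarrow> nat) \<Rightarrow> nat \<Rightarrow> bool" where
  "has_no_cycle phi n \<longleftrightarrow>
     \<not> (\<exists>m\<ge>2. \<exists>x\<in>{1..n}. (local_fun phi n ^^ m) x = x)"

text \<open>M_n(phi): n x n integer matrix whose j-th column (1-based) is the unit vector
  e_{phi_n(j)} (e_0 = zero vector). Isabelle matrices are 0-indexed, so entry (i,j)
  corresponds to row i+1, column j+1.\<close>
definition M_mat :: "nat \<Rightarrow> (nat \<Rightarrow> nat) \<Rightarrow> int mat" where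
  "M_mat n phi = mat n n (\<lambda>(i, j). if local_fun phi n (j + 1) = i + 1 then 1 else 0)"

definition nnz :: "'a::zero mat \<Rightarrow> nat" where
  "nnz A = card {(i, j). i < dim_row A \<and> j < dim_col A \<and> A $$ (i, j) \<noteq> 0}"

definition J_set :: "nat \<Rightarrow> nat \<Rightarrow> (nat \<Rightarrow> nat) \<Rightarrow> nat set" where
  "J_set n k phi = {x \<in> {1..n}. (local_fun phi n ^^ k) x \<in> {1..n}}"

end

theory Submission
  imports Defs
begin

text \<open>The k-th power of M_n(phi) is the matrix of the k-th iterate of phi_n, so its nonzero
  entries are in bijection with J_{n,k}(phi). Without cycles or fixed points in D_n, every orbit of
  phi_n leaves D_n after finitely many steps, and the orbit point k steps before it leaves lies in
  J_{n,k} but not in J_{n,k+1}; hence J_{n,k+1} is a proper subset of J_{n,k} whenever the latter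
  is nonempty. Starting
  from J_{n,0} = D_n this gives |J_{n,k}| \<le> n - k.\<close>

lemma local_fun_le: "local_fun phi n x \<le> n"
  unfolding local_fun_def by auto

lemma local_fun_zero [simp]: "local_fun phi n 0 = 0"
  unfolding local_fun_def by auto

lemma funpow_local_fun_zero [simp]: "(local_fun phi n ^^ i) 0 = 0"
  by (induction i) auto

lemma funpow_local_fun_le: "x \<le> n \<Longrightarrow> (local_fun phi n ^^ i) x \<le> n"
  by (induction i) (auto simp: local_fun_le)

lemma funpow_local_fun_in_range_downward:
  assumes "(local_fun phi n ^^ j) x \<in> {1..n}" and "i \<le> j" and "x \<le> n"
  shows "(local_fun phi n ^^ i) x \<in> {1..n}"
proof -
  let ?f = "local_fun phi n"
  have "(?f ^^ j) x = (?f ^^ (j - i)) ((?f ^^ i) x)"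
    using \<open>i \<le> j\<close> by (metis funpow_add le_add_diff_inverse2 o_apply)
  then have "(?f ^^ i) x \<noteq> 0"
    using assms(1) by (metis atLeastAtMost_iff funpow_local_fun_zero not_one_le_zero)
  then show ?thesis
    using funpow_local_fun_le[OF \<open>x \<le> n\<close>] by (simp add: Suc_leI)
qed

lemma M_mat_power_index:
  assumes "i < n" "j < n"
  shows "(M_mat n phi ^\<^sub>m k) $$ (i, j) =
    (if (local_fun phi n ^^ k) (j + 1) = i + 1 then 1 else 0)"
  using assms
proof (induction k arbitrary: i j)
  case 0
  then show ?case by (simp add: M_mat_def)
next
  case (Suc k)
  let ?f = "local_fun phi n"
  let ?P = "\<lambda>l. if (?f ^^ k) (l + 1) = i + 1 then 1 else 0 :: int"
  have "(M_mat n phi ^\<^sub>m Suc k) $$ (i, j) =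
      (\<Sum>l<n. (M_mat n phi ^\<^sub>m k) $$ (i, l) * M_mat n phi $$ (l, j))"
    using Suc.prems
    by (simp add: M_mat_def scalar_prod_def atLeast0LessThan row_def col_def)
  also have "\<dots> = (\<Sum>l<n. ?P l * (if ?f (j + 1) = l + 1 then 1 else 0))"
    using Suc by (intro sum.cong) (auto simp: M_mat_def)
  also have "\<dots> = (if (?f ^^ k) (?f (j + 1)) = i + 1 then 1 else 0)"
  proof (cases "?f (j + 1)")
    case 0
    then show ?thesis by simp
  next
    case (Suc l)
    then have "l < n"
      using local_fun_le[of phi n "j + 1"] by simp
    then have "(\<Sum>l'<n. ?P l' * (if ?f (j + 1) = l' + 1 then 1 else 0)) = (\<Sum>l'\<in>{l}. ?P l')"
      using Suc by (intro sum.mono_neutral_cong_right) auto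
    then show ?thesis
      using Suc by simp
  qed
  also have "\<dots> = (if (?f ^^ Suc k) (j + 1) = i + 1 then 1 else 0)"
    by (simp only: funpow_Suc_right o_apply)
  finally show ?case .
qed

lemma nnz_M_mat_power: "nnz (M_mat n phi ^\<^sub>m k) = card (J_set n k phi)"
proof -
  let ?f = "local_fun phi n"
  let ?S = "{(i, j). i < n \<and> j < n \<and> (?f ^^ k) (j + 1) = i + 1}"
  let ?g = "\<lambda>x. ((?f ^^ k) x - 1, x - 1)"
  have "dim_row (M_mat n phi ^\<^sub>m k) = n" "dim_col (M_mat n phi ^\<^sub>m k) = n"
    by (simp_all add: M_mat_def)
  then have "nnz (M_mat n phi ^\<^sub>m k) = card ?S"
    unfolding nnz_def
    by (intro arg_cong[where f = card]) (auto simp: M_mat_power_index split: if_splits)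
  also have "?S = ?g ` J_set n k phi"
  proof (intro equalityI subsetI)
    fix p
    assume "p \<in> ?S"
    then obtain i j where "p = (i, j)" "j < n" "(?f ^^ k) (j + 1) = i + 1" "i < n"
      by blast
    then show "p \<in> ?g ` J_set n k phi"
      by (intro image_eqI[of _ _ "j + 1"]) (auto simp: J_set_def)
  qed (auto simp: J_set_def)
  also have "card (?g ` J_set n k phi) = card (J_set n k phi)"
    by (rule card_image) (auto simp: J_set_def inj_on_def)
  finally show ?thesis .
qed

lemma funpow_local_fun_neq:
  assumes "has_no_cycle phi n" and "\<And>x. x \<ge> 1 \<Longrightarrow> phi x \<noteq> x"
    and "(local_fun phi n ^^ a) x \<in> {1..n}" and "a < b"
  shows "(local_fun phi n ^^ a) x \<noteq> (local_fun phi n ^^ b) x"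
proof
  let ?f = "local_fun phi n"
  let ?y = "(?f ^^ a) x"
  assume "?y = (?f ^^ b) x"
  also have "\<dots> = (?f ^^ (b - a)) ?y"
    using \<open>a < b\<close> by (metis funpow_add less_imp_le_nat le_add_diff_inverse2 o_apply)
  finally have cycle: "(?f ^^ (b - a)) ?y = ?y" ..
  show False
  proof (cases "b - a = 1")
    case True
    then have "?f ?y = ?y"
      using cycle by simp
    then show False
      using assms(2)[of ?y] assms(3) unfolding local_fun_def by (auto split: if_splits)
  next
    case False
    then have "b - a \<ge> 2"
      using \<open>a < b\<close> by simp
    then show False
      using cycle assms(1,3) unfolding has_no_cycle_def by blast
  qed
qed

lemma local_fun_orbit_escapes:
  assumes "has_no_cycle phi n" and "\<And>x. x \<ge> 1 \<Longrightarrow> phi x \<noteq> x"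
  shows "\<exists>i. (local_fun phi n ^^ i) x \<notin> {1..n}"
proof (rule ccontr)
  let ?orbit = "\<lambda>i. (local_fun phi n ^^ i) x"
  assume "\<nexists>i. ?orbit i \<notin> {1..n}"
  then have "range ?orbit \<subseteq> {1..n}" and "inj ?orbit"
    using funpow_local_fun_neq[OF assms] by (auto intro: linorder_injI)
  then have "finite (UNIV :: nat set)"
    using finite_imageD finite_subset by blast
  then show False by simp
qed

lemma J_set_Suc_subset: "J_set n (Suc k) phi \<subseteq> J_set n k phi"
  unfolding J_set_def using funpow_local_fun_in_range_downward[where j = "Suc k" and i = k] by auto

lemma J_set_Suc_psubset:
  assumes "has_no_cycle phi n" and "\<And>x. x \<ge> 1 \<Longrightarrow> phi x \<noteq> x"
    and "J_set n k phi \<noteq> {}"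
  shows "J_set n (Suc k) phi \<subset> J_set n k phi"
proof
  let ?f = "local_fun phi n"
  show "J_set n (Suc k) phi \<subseteq> J_set n k phi"
    by (rule J_set_Suc_subset)
  obtain x where x: "x \<in> {1..n}" "(?f ^^ k) x \<in> {1..n}"
    using assms(3) unfolding J_set_def by blast
  define e where "e = (LEAST i. (?f ^^ i) x \<notin> {1..n})"
  have escaped: "(?f ^^ e) x \<notin> {1..n}"
    unfolding e_def using local_fun_orbit_escapes[OF assms(1,2)] by (rule LeastI_ex)
  have "k < e"
    using escaped x funpow_local_fun_in_range_downward[where j = k and i = e] by force
  define y where "y = (?f ^^ (e - Suc k)) x"
  have shift: "(?f ^^ a) y = (?f ^^ (a + (e - Suc k))) x" for a
    unfolding y_def by (simp add: funpow_add)
  have "k + (e - Suc k) = e - 1" and "Suc k + (e - Suc k) = e"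
    using \<open>k < e\<close> by simp_all
  then have "(?f ^^ k) y = (?f ^^ (e - 1)) x" and "(?f ^^ Suc k) y = (?f ^^ e) x"
    using shift[of k] shift[of "Suc k"] by (simp_all only:)
  moreover have "(?f ^^ (e - 1)) x \<in> {1..n}"
  proof -
    have "e - 1 < e"
      using \<open>k < e\<close> by simp
    then have "\<not> (?f ^^ (e - 1)) x \<notin> {1..n}"
      unfolding e_def by (rule not_less_Least)
    then show ?thesis by simp
  qed
  moreover have "y \<in> {1..n}"
    using funpow_local_fun_in_range_downward[OF \<open>(?f ^^ (e - 1)) x \<in> {1..n}\<close>] x
    unfolding y_def by simp
  ultimately have "y \<in> J_set n k phi" and "y \<notin> J_set n (Suc k) phi"
    using escaped unfolding J_set_def by simp_all
  then show "J_set n (Suc k) phi \<noteq> J_set n k phi"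
    by blast
qed

lemma card_J_set_le:
  assumes "has_no_cycle phi n" and "\<And>x. x \<ge> 1 \<Longrightarrow> phi x \<noteq> x"
  shows "card (J_set n k phi) \<le> n - k"
proof (induction k)
  case 0
  have "J_set n 0 phi = {1..n}"
    by (auto simp: J_set_def)
  then show ?case by simp
next
  case (Suc k)
  show ?case
  proof (cases "J_set n k phi = {}")
    case True
    then show ?thesis
      using J_set_Suc_subset[of n k phi] by simp
  next
    case False
    have "finite (J_set n k phi)"
      by (simp add: J_set_def)
    then have "card (J_set n (Suc k) phi) < card (J_set n k phi)"
      using J_set_Suc_psubset[OF assms False] by (rule psubset_card_mono)
    then show ?thesis
      using Suc.IH by simp
  qed
qed

theorem corollary3p4:
  fixes phi :: "nat \<Rightarrow> nat" and n :: nat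
  assumes "phi 0 = 0"
    and "\<And>x. x \<ge> 1 \<Longrightarrow> phi x \<noteq> x"
    and "n \<ge> 2"
    and "has_no_cycle phi n"
  shows "\<forall>k. 1 \<le> k \<and> k \<le> n \<longrightarrow>
           nnz (M_mat n phi ^\<^sub>m k) = card (J_set n k phi) \<and> card (J_set n k phi) \<le> n - k"
  using nnz_M_mat_power card_J_set_le[OF assms(4,2)] by blast

end
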